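(* Fix a finite set $T$ of tuples $(q_1,\dots,q_m,r;p_1,\dots,p_k,t)$ of variables. The following three extensions of $\mathbf{L}^*(/)$ (each including the cut rule) derive exactly the same sequents: (1) $\mathbf{L}^*(/)$ extended with the B-rules for all tuples in $T$; (2) $\mathbf{L}^*(/)$ extended with the $\mathrm{B}'$-rules for all tuples in $T$; (3) $\mathbf{L}^*(/)$ extended with the B-axioms for all tuples in $T$.
   Context: $\mathbf{L}^*(/)$ is the one-division Lambek calculus: formulae are built from variables using only $/$; sequents are $\Pi\to A$ with $\Pi$ a finite (possibly empty, $\Lambda$) sequence of formulae; axioms $A\to A$; rules ($/L$) from $\Pi\to A$ and $\Delta_1,B,\Delta_2\to C$ infer $\Delta_1,B/A,\Pi,\Delta_2\to C$; ($/R$) from $\Pi,A\to B$ infer $\Pi\to B/A$; (cut) from $\Pi\to A$ and $\Delta_1,A,\Delta_2\to C$ infer $\Delta_1,\Pi,\Delta_2\to C$. For a tuple $(q_1,\dots,q_m,r;p_1,\dots,p_k,t)$ of concrete variables: the B-rule is: from $\Delta,q_1,\dots,q_m\to r$ infer $p_1,\dots,p_k,\Delta\to t$ (for arbitrary sequences $\Delta$ of formulae); the $\mathrm{B}'$-rule is: from $\Pi_1\to p_1$, ..., $\Pi_k\to p_k$ and $\Delta,q_1,\dots,q_m\to r$ infer $\Pi_1,\dots,\Pi_k,\Delta\to t$; the B-axiom is $\Lambda\to (t/(r/q_1\ldots q_m))/p_1\ldots p_k$, where $E/F_1\ldots F_n$ abbreviates $(\ldots((E/F_n)/F_{n-1})\ldots)/F_1$.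 *)

theory Defs
  imports Main
begin

datatype 'a fm = V 'a | Div "'a fm" "'a fm"

text \<open>E / F1 ... Fn abbreviates (...((E/Fn)/F(n-1))...)/F1.\<close>
fun divs :: "'a fm \<Rightarrow> 'a fm list \<Rightarrow> 'a fm" where
  "divs E [] = E"
| "divs E (F # Fs) = Div (divs E Fs) F"

text \<open>A tuple (q1..qm, r; p1..pk, t) of variables, stored as (qs, r, ps, t).\<close>
type_synonym 'a tup = "'a list \<times> 'a \<times> 'a list \<times> 'a"

datatype ext = ExtB | ExtB' | ExtAx

definition b_axiom :: "'a tup \<Rightarrow> 'a fm" where
  "b_axiom tp = (case tp of (qs, r, ps, t) \<Rightarrow>
     divs (Div (V t) (divs (V r) (map V qs))) (map V ps))"

inductive deriv :: "ext \<Rightarrow> 'a tup set \<Rightarrow> 'a fm list \<Rightarrow> 'a fm \<Rightarrow> bool"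
  for e :: ext and T :: "'a tup set" where
  ax: "deriv e T [A] A"
| divL: "deriv e T \<Pi> A \<Longrightarrow> deriv e T (\<Delta>1 @ [B] @ \<Delta>2) C
         \<Longrightarrow> deriv e T (\<Delta>1 @ [Div B A] @ \<Pi> @ \<Delta>2) C"
| divR: "deriv e T (\<Pi> @ [A]) B \<Longrightarrow> deriv e T \<Pi> (Div B A)"
| cut: "deriv e T \<Pi> A \<Longrightarrow> deriv e T (\<Delta>1 @ [A] @ \<Delta>2) C
         \<Longrightarrow> deriv e T (\<Delta>1 @ \<Pi> @ \<Delta>2) C"
| brule: "e = ExtB \<Longrightarrow> (qs, r, ps, t) \<in> T
         \<Longrightarrow> deriv e T (\<Delta> @ map V qs) (V r)
         \<Longrightarrow> deriv e T (map V ps @ \<Delta>) (V t)"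
| brule': "e = ExtB' \<Longrightarrow> (qs, r, ps, t) \<in> T
         \<Longrightarrow> length \<Pi>s = length ps
         \<Longrightarrow> (\<forall>i < length ps. deriv e T (\<Pi>s ! i) (V (ps ! i)))
         \<Longrightarrow> deriv e T (\<Delta> @ map V qs) (V r)
         \<Longrightarrow> deriv e T (concat \<Pi>s @ \<Delta>) (V t)"
| baxiom: "e = ExtAx \<Longrightarrow> tp \<in> T \<Longrightarrow> deriv e T [] (b_axiom tp)"

end

theory Submission
  imports Defs
begin

text \<open>The three calculi share their structural rules, so a derivation in one transfers to
  another as soon as the extra rules of the first are admissible in the second. The
  \<open>B'\<close>-rule is the B-rule followed by cuts on \<open>p\<^sub>1, \<dots>, p\<^sub>k\<close>, and conversely the B-rule is the
  \<open>B'\<close>-rule with axioms \<open>p\<^sub>i \<rightarrow> p\<^sub>i\<close> as premises. The B-axiom is obtained from the B-rule applied to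
  the axiom \<open>r/q\<^sub>1\<dots>q\<^sub>m, q\<^sub>1, \<dots>, q\<^sub>m \<rightarrow> r\<close> followed by \<open>/R\<close>; conversely, since \<open>/R\<close> is invertible
  in presence of cut, the B-axiom yields \<open>p\<^sub>1, \<dots>, p\<^sub>k, r/q\<^sub>1\<dots>q\<^sub>m \<rightarrow> t\<close>, and a cut with
  \<open>\<Delta> \<rightarrow> r/q\<^sub>1\<dots>q\<^sub>m\<close> gives the B-rule.\<close>

lemma deriv_Div_inverse:
  assumes "deriv e T \<Pi> (Div B A)"
  shows "deriv e T (\<Pi> @ [A]) B"
proof -
  have "deriv e T ([] @ [Div B A] @ [A] @ []) B"
    using divL[of e T "[A]" A "[]" B "[]" B] ax[of e T A] ax[of e T B] by simp
  from cut[OF assms this] show ?thesis by simp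
qed

lemma deriv_divsI: "deriv e T (\<Pi> @ Fs) E \<Longrightarrow> deriv e T \<Pi> (divs E Fs)"
proof (induction Fs arbitrary: \<Pi>)
  case (Cons F Fs)
  then have "deriv e T (\<Pi> @ [F]) (divs E Fs)" by simp
  then show ?case by (simp add: divR)
qed simp

lemma deriv_divs_inverse: "deriv e T \<Pi> (divs E Fs) \<Longrightarrow> deriv e T (\<Pi> @ Fs) E"
proof (induction Fs arbitrary: \<Pi>)
  case (Cons F Fs)
  then have "deriv e T (\<Pi> @ [F]) (divs E Fs)" using deriv_Div_inverse by simp
  from Cons.IH[OF this] show ?case by simp
qed simp

lemma deriv_cut_list:
  "deriv e T (\<Gamma> @ As @ \<Delta>) C \<Longrightarrow> list_all2 (deriv e T) \<Pi>s As
   \<Longrightarrow> deriv e T (\<Gamma> @ concat \<Pi>s @ \<Delta>) C"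
proof (induction As arbitrary: \<Gamma> \<Pi>s)
  case (Cons A As)
  then obtain \<Pi> \<Pi>s' where \<Pi>s: "\<Pi>s = \<Pi> # \<Pi>s'" "deriv e T \<Pi> A" "list_all2 (deriv e T) \<Pi>s' As"
    by (cases \<Pi>s) auto
  have "deriv e T (\<Gamma> @ [A] @ As @ \<Delta>) C" using Cons.prems(1) by simp
  from cut[OF \<Pi>s(2) this] have "deriv e T ((\<Gamma> @ \<Pi>) @ As @ \<Delta>) C" by simp
  from Cons.IH[OF this \<Pi>s(3)] show ?case using \<Pi>s(1) by simp
qed simp

lemma deriv_transfer:
  assumes B_admissible: "\<And>qs r ps t \<Delta>. e = ExtB \<Longrightarrow> (qs, r, ps, t) \<in> T
      \<Longrightarrow> deriv e' T (\<Delta> @ map V qs) (V r) \<Longrightarrow> deriv e' T (map V ps @ \<Delta>) (V t)"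
    and B'_admissible: "\<And>qs r ps t \<Pi>s \<Delta>. e = ExtB' \<Longrightarrow> (qs, r, ps, t) \<in> T
      \<Longrightarrow> list_all2 (deriv e' T) \<Pi>s (map V ps)
      \<Longrightarrow> deriv e' T (\<Delta> @ map V qs) (V r) \<Longrightarrow> deriv e' T (concat \<Pi>s @ \<Delta>) (V t)"
    and axiom_derivable: "\<And>tp. e = ExtAx \<Longrightarrow> tp \<in> T \<Longrightarrow> deriv e' T [] (b_axiom tp)"
  shows "deriv e T \<Pi> A \<Longrightarrow> deriv e' T \<Pi> A"
proof (induction rule: deriv.induct)
  case (brule' qs r ps t \<Pi>s \<Delta>)
  then have "list_all2 (deriv e' T) \<Pi>s (map V ps)" by (simp add: list_all2_conv_all_nth)
  with brule' show ?case by (intro B'_admissible)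
qed (auto intro: deriv.intros deriv.divL[simplified] deriv.cut[simplified]
    B_admissible axiom_derivable)

lemma B_admissible_ExtB':
  assumes "(qs, r, ps, t) \<in> T" "deriv ExtB' T (\<Delta> @ map V qs) (V r)"
  shows "deriv ExtB' T (map V ps @ \<Delta>) (V t)"
proof -
  have "deriv ExtB' T (concat (map (\<lambda>p. [V p]) ps) @ \<Delta>) (V t)"
    by (rule brule'[OF _ assms(1)]) (auto intro: ax assms(2))
  moreover have "concat (map (\<lambda>p. [V p]) ps) = map V ps" by (induction ps) auto
  ultimately show ?thesis by simp
qed

lemma B'_admissible_ExtB:
  assumes "(qs, r, ps, t) \<in> T" "list_all2 (deriv ExtB T) \<Pi>s (map V ps)"
    and "deriv ExtB T (\<Delta> @ map V qs) (V r)"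
  shows "deriv ExtB T (concat \<Pi>s @ \<Delta>) (V t)"
proof -
  have "deriv ExtB T ([] @ map V ps @ \<Delta>) (V t)" using brule[OF _ assms(1,3)] by simp
  from deriv_cut_list[OF this assms(2)] show ?thesis by simp
qed

lemma B_admissible_ExtAx:
  assumes "(qs, r, ps, t) \<in> T" "deriv ExtAx T (\<Delta> @ map V qs) (V r)"
  shows "deriv ExtAx T (map V ps @ \<Delta>) (V t)"
proof -
  let ?R = "divs (V r) (map V qs)"
  have "deriv ExtAx T [] (divs (Div (V t) ?R) (map V ps))"
    using baxiom[OF _ assms(1)] by (simp add: b_axiom_def)
  then have "deriv ExtAx T (map V ps @ [?R] @ []) (V t)"
    using deriv_divs_inverse deriv_Div_inverse by fastforce
  moreover have "deriv ExtAx T \<Delta> ?R" using deriv_divsI assms(2) by blast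
  ultimately show ?thesis using cut by fastforce
qed

lemma b_axiom_derivable_ExtB:
  assumes "tp \<in> T"
  shows "deriv ExtB T [] (b_axiom tp)"
proof -
  obtain qs r ps t where tp: "tp = (qs, r, ps, t)" by (cases tp)
  let ?R = "divs (V r) (map V qs)"
  have "deriv ExtB T ([?R] @ map V qs) (V r)" by (rule deriv_divs_inverse[OF ax])
  from brule[OF _ _ this] assms tp have "deriv ExtB T (map V ps @ [?R]) (V t)" by simp
  then have "deriv ExtB T ([] @ map V ps) (Div (V t) ?R)" by (simp add: divR)
  from deriv_divsI[OF this] show ?thesis by (simp add: b_axiom_def tp)
qed

theorem lemma3:
  fixes T :: "'a tup set"
  assumes "finite T"
  shows "(\<forall>\<Pi> A. deriv ExtB T \<Pi> A \<longleftrightarrow> deriv ExtB' T \<Pi> A)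
       \<and> (\<forall>\<Pi> A. deriv ExtB T \<Pi> A \<longleftrightarrow> deriv ExtAx T \<Pi> A)"
proof -
  have "deriv ExtB T \<Pi> A \<longleftrightarrow> deriv ExtB' T \<Pi> A" for \<Pi> A
  proof
    show "deriv ExtB T \<Pi> A \<Longrightarrow> deriv ExtB' T \<Pi> A"
      by (rule deriv_transfer) (auto intro: B_admissible_ExtB')
    show "deriv ExtB' T \<Pi> A \<Longrightarrow> deriv ExtB T \<Pi> A"
      by (rule deriv_transfer) (auto intro: B'_admissible_ExtB)
  qed
  moreover have "deriv ExtB T \<Pi> A \<longleftrightarrow> deriv ExtAx T \<Pi> A" for \<Pi> A
  proof
    show "deriv ExtB T \<Pi> A \<Longrightarrow> deriv ExtAx T \<Pi> A"
      by (rule deriv_transfer) (auto intro: B_admissible_ExtAx)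
    show "deriv ExtAx T \<Pi> A \<Longrightarrow> deriv ExtB T \<Pi> A"
      by (rule deriv_transfer) (auto intro: b_axiom_derivable_ExtB)
  qed
  ultimately show ?thesis by blast
qed

end
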